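(* There is an absolute constant $c$ such that for every graph $G$ with $V(G)=[n]$ and every $k\ge1$, with $H=G^k$ and $(P,N)=R[H]$ as defined below, there is a CNF formula consistent with $(P,N)$ with at most $\chi(G)^k n^{c}$ clauses.
   Context: $G^k$ is the $k$-fold lexicographic product; its vertices are tuples $\vec u=(u_1,\dots,u_k)\in V(G)^k$, and $\vec u\vec v\in E(G^k)$ iff there is $i$ with $u_j=v_j$ for $j<i$ and $u_iv_i\in E(G)$. For $u\in[n]$ let $\mathrm{enc}(u)=0^{u-1}10^{n-u}\in\{0,1\}^n$, and for an edge $uv$ let $\mathrm{enc}(uv)\in\{0,1\}^n$ have 1s exactly at positions $u$ and $v$. Samples lie in $\{0,1\}^{nk}$ (variables $z(i,u)$, $i\in[k]$, $u\in[n]$, in $k$ blocks). Negative samples: $N=\{\mathrm{enc}(u_1)\cdots\mathrm{enc}(u_k):\vec u\in V(H)\}$. Positive samples: $P=\{\mathrm{enc}(u_1)\cdots\mathrm{enc}(u_{i-1})\,\mathrm{enc}(u_iv)\,\mathrm{enc}(u_{i+1})\cdots\mathrm{enc}(u_k):\vec u\in V(H),\ i\in[k],\ u_iv\in E(G)\}$. A formula is consistent if it is true on all of $P$ and false on all of $N$. $\chi$ is the chromatic number. *)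

theory Defs
  imports Complex_Main
begin

definition graph_on :: "nat \<Rightarrow> (nat \<Rightarrow> nat \<Rightarrow> bool) \<Rightarrow> bool" where
  "graph_on n E \<longleftrightarrow> (\<forall>u v. E u v \<longrightarrow> u \<in> {1..n} \<and> v \<in> {1..n} \<and> u \<noteq> v \<and> E v u)"

definition proper_colouring :: "nat \<Rightarrow> (nat \<Rightarrow> nat \<Rightarrow> bool) \<Rightarrow> nat \<Rightarrow> (nat \<Rightarrow> nat) \<Rightarrow> bool" where
  "proper_colouring n E c f \<longleftrightarrow>
     (\<forall>u\<in>{1..n}. f u < c) \<and> (\<forall>u v. E u v \<longrightarrow> f u \<noteq> f v)"

definition chromatic_number :: "nat \<Rightarrow> (nat \<Rightarrow> nat \<Rightarrow> bool) \<Rightarrow> nat" where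
  "chromatic_number n E = (LEAST c. \<exists>f. proper_colouring n E c f)"

text \<open>Vertices of H = G^k: tuples (u_1,...,u_k) in [n]^k, as functions on {1..k}
  (values outside {1..k} fixed to 0 for uniqueness).\<close>
definition tuples :: "nat \<Rightarrow> nat \<Rightarrow> (nat \<Rightarrow> nat) set" where
  "tuples n k = {us. (\<forall>i\<in>{1..k}. us i \<in> {1..n}) \<and> (\<forall>i. i \<notin> {1..k} \<longrightarrow> us i = 0)}"

text \<open>Lexicographic power edges (for reference; the samples only use V(H)).\<close>
definition lex_edge :: "nat \<Rightarrow> (nat \<Rightarrow> nat \<Rightarrow> bool) \<Rightarrow> (nat \<Rightarrow> nat) \<Rightarrow> (nat \<Rightarrow> nat) \<Rightarrow> bool" where
  "lex_edge k E us vs \<longleftrightarrow> (\<exists>i\<in>{1..k}. (\<forall>j\<in>{1..<i}. us j = vs j) \<and> E (us i) (vs i))"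

text \<open>Samples in {0,1}^{nk}: assignments to variables z(i,u), i in [k], u in [n];
  represented as functions on pairs (i,u), False outside [k] x [n].\<close>
type_synonym sample = "nat \<times> nat \<Rightarrow> bool"

definition enc_tuple :: "nat \<Rightarrow> nat \<Rightarrow> (nat \<Rightarrow> nat) \<Rightarrow> sample" where
  "enc_tuple n k us = (\<lambda>(i, w). i \<in> {1..k} \<and> w \<in> {1..n} \<and> w = us i)"

definition neg_samples :: "nat \<Rightarrow> nat \<Rightarrow> sample set" where
  "neg_samples n k = enc_tuple n k ` tuples n k"

definition pos_samples :: "nat \<Rightarrow> (nat \<Rightarrow> nat \<Rightarrow> bool) \<Rightarrow> nat \<Rightarrow> sample set" where
  "pos_samples n E k = {x. \<exists>us\<in>tuples n k. \<exists>j\<in>{1..k}. \<exists>v. E (us j) v \<and>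
      x = (\<lambda>(i, w). i \<in> {1..k} \<and> w \<in> {1..n} \<and> (w = us i \<or> (i = j \<and> w = v)))}"

type_synonym literal = "(nat \<times> nat) \<times> bool"
type_synonym cnf = "literal set list"

definition cnf_eval :: "cnf \<Rightarrow> sample \<Rightarrow> bool" where
  "cnf_eval F x \<longleftrightarrow> (\<forall>C\<in>set F. \<exists>(z, b)\<in>C. x z = b)"

definition cnf_over :: "nat \<Rightarrow> nat \<Rightarrow> cnf \<Rightarrow> bool" where
  "cnf_over n k F \<longleftrightarrow> (\<forall>C\<in>set F. finite C \<and> (\<forall>((i, w), b)\<in>C. i \<in> {1..k} \<and> w \<in> {1..n}))"

definition consistent :: "cnf \<Rightarrow> sample set \<Rightarrow> sample set \<Rightarrow> bool" where
  "consistent F P N \<longleftrightarrow> (\<forall>x\<in>P. cnf_eval F x) \<and> (\<forall>x\<in>N. \<not> cnf_eval F x)"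

end

theory Submission
  imports Defs
begin

(* Fix a proper colouring f of G with \<chi> = \<chi>(G) colours.  For every colour
   vector cs \<in> [\<chi>]^k take the monotone clause
       C_cs  =  OR { z(i,w) : i \<in> [k], w \<in> [n], f w \<noteq> cs_i },
   i.e. "some block i has a 1 at a vertex whose colour is not cs_i".  The CNF of all
   these clauses has exactly \<chi>^k clauses, so the theorem holds even with c = 0.
   A negative sample enc(u_1)...enc(u_k) falsifies the clause of its own colour
   vector (f u_1, ..., f u_k).  A positive sample has, in some block j, ones at both
   ends of an edge u_j v; since f u_j \<noteq> f v, every clause is satisfied in block j. *)

lemma identity_colouring:
  assumes "graph_on n E"
  shows "proper_colouring n E n (\<lambda>u. u - 1)"
  using assms unfolding proper_colouring_def graph_on_def by fastforce

lemma chromatic_colouring_exists: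
  assumes "graph_on n E"
  shows "\<exists>f. proper_colouring n E (chromatic_number n E) f"
  unfolding chromatic_number_def
  by (rule LeastI_ex) (use identity_colouring[OF assms] in blast)

lemma chromatic_number_le:
  assumes "graph_on n E"
  shows "chromatic_number n E \<le> n"
  unfolding chromatic_number_def
  by (rule Least_le) (use identity_colouring[OF assms] in blast)

text \<open>The clause of the colour vector cs (block i is compared with cs ! (i - 1)):
  some block i contains a 1 at a vertex whose colour differs from that entry.\<close>
definition colour_clause :: "nat \<Rightarrow> nat \<Rightarrow> (nat \<Rightarrow> nat) \<Rightarrow> nat list \<Rightarrow> literal set" where
  "colour_clause n k f cs =
     {((i, w), True) | i w. i \<in> {1..k} \<and> w \<in> {1..n} \<and> f w \<noteq> cs ! (i - 1)}"

definition colour_cnf :: "nat \<Rightarrow> nat \<Rightarrow> (nat \<Rightarrow> nat) \<Rightarrow> nat \<Rightarrow> cnf" where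
  "colour_cnf n k f \<chi> = map (colour_clause n k f) (List.n_lists k [0..<\<chi>])"

lemma colour_cnf_length: "length (colour_cnf n k f \<chi>) = \<chi> ^ k"
  by (simp add: colour_cnf_def length_n_lists)

lemma colour_cnf_over: "cnf_over n k (colour_cnf n k f \<chi>)"
proof -
  have sub: "colour_clause n k f cs \<subseteq> ({1..k} \<times> {1..n}) \<times> {True}" for cs
    unfolding colour_clause_def by auto
  then have "finite (colour_clause n k f cs)" for cs
    by (rule finite_subset) simp
  with sub show ?thesis
    unfolding cnf_over_def colour_cnf_def by fastforce
qed

lemma colour_clause_satisfied:
  "(\<exists>(z, b)\<in>colour_clause n k f cs. x z = b) \<longleftrightarrow>
     (\<exists>i\<in>{1..k}. \<exists>w\<in>{1..n}. x (i, w) \<and> f w \<noteq> cs ! (i - 1))"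
  unfolding colour_clause_def by fastforce

lemma colour_cnf_rejects_tuple:
  assumes colours: "\<forall>u\<in>{1..n}. f u < \<chi>" and us: "us \<in> tuples n k"
  shows "\<not> cnf_eval (colour_cnf n k f \<chi>) (enc_tuple n k us)"
proof -
  define cs where "cs = map (\<lambda>i. f (us (i + 1))) [0..<k]"
  have "\<forall>i\<in>{1..k}. us i \<in> {1..n}" using us unfolding tuples_def by blast
  then have "set cs \<subseteq> set [0..<\<chi>]"
    using colours unfolding cs_def by auto
  then have "colour_clause n k f cs \<in> set (colour_cnf n k f \<chi>)"
    by (simp add: colour_cnf_def set_n_lists cs_def)
  moreover have "cs ! (i - 1) = f (us i)" if "i \<in> {1..k}" for i
    using that unfolding cs_def by auto
  then have "\<not> (\<exists>(z, b)\<in>colour_clause n k f cs. enc_tuple n k us z = b)"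
    unfolding colour_clause_satisfied enc_tuple_def by auto
  ultimately show ?thesis unfolding cnf_eval_def by blast
qed

text \<open>Every positive sample satisfies every clause: in the block j carrying the edge
  u_j v, at least one endpoint has a colour different from cs ! (j - 1).\<close>
lemma colour_cnf_accepts_edge_sample:
  assumes G: "graph_on n E" and proper: "\<forall>u v. E u v \<longrightarrow> f u \<noteq> f v"
    and x: "x \<in> pos_samples n E k"
  shows "cnf_eval (colour_cnf n k f \<chi>) x"
  unfolding cnf_eval_def
proof
  obtain us j v where us: "us \<in> tuples n k" and j: "j \<in> {1..k}" and e: "E (us j) v"
    and x_def: "x = (\<lambda>(i, w). i \<in> {1..k} \<and> w \<in> {1..n} \<and> (w = us i \<or> (i = j \<and> w = v)))"
    using x unfolding pos_samples_def by blast
  have ends: "us j \<in> {1..n}" "v \<in> {1..n}"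
    using us j e G unfolding tuples_def graph_on_def by blast+
  have ones: "x (j, us j)" "x (j, v)" using x_def j ends by auto
  have differ: "f (us j) \<noteq> f v" using proper e by blast
  fix C assume "C \<in> set (colour_cnf n k f \<chi>)"
  then obtain cs where C: "C = colour_clause n k f cs" unfolding colour_cnf_def by auto
  have "f (us j) \<noteq> cs ! (j - 1) \<or> f v \<noteq> cs ! (j - 1)" using differ by auto
  then show "\<exists>(z, b)\<in>C. x z = b"
    unfolding C colour_clause_satisfied using j ends ones by blast
qed

lemma colour_cnf_consistent:
  assumes "graph_on n E" and "proper_colouring n E \<chi> f"
  shows "consistent (colour_cnf n k f \<chi>) (pos_samples n E k) (neg_samples n k)"
  using assms colour_cnf_accepts_edge_sample colour_cnf_rejects_tuple
  unfolding consistent_def neg_samples_def proper_colouring_def by blast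

theorem mainTheorem17:
  "\<exists>c::real. \<forall>n k (E :: nat \<Rightarrow> nat \<Rightarrow> bool). graph_on n E \<and> k \<ge> 1 \<longrightarrow>
     (\<exists>F :: cnf. cnf_over n k F \<and> consistent F (pos_samples n E k) (neg_samples n k) \<and>
        real (length F) \<le> real (chromatic_number n E) ^ k * real n powr c)"
proof (intro exI[of _ 0] allI impI)
  fix n k E assume "graph_on n E \<and> (k::nat) \<ge> 1"
  then have G: "graph_on n E" and k: "k \<ge> 1" by auto
  define \<chi> where "\<chi> = chromatic_number n E"
  obtain f where f: "proper_colouring n E \<chi> f"
    using chromatic_colouring_exists[OF G] unfolding \<chi>_def by blast
  define F where "F = colour_cnf n k f \<chi>"
  have "real (length F) \<le> real \<chi> ^ k * real n powr 0"
  proof (cases "n = 0")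
    case True
    then have "\<chi> = 0" using chromatic_number_le[OF G] unfolding \<chi>_def by simp
    then show ?thesis using k by (simp add: F_def colour_cnf_length power_0_left)
  qed (simp add: F_def colour_cnf_length)
  then show "\<exists>F. cnf_over n k F \<and> consistent F (pos_samples n E k) (neg_samples n k) \<and>
      real (length F) \<le> real (chromatic_number n E) ^ k * real n powr 0"
    using colour_cnf_over colour_cnf_consistent[OF G f] unfolding F_def \<chi>_def by blast
qed

end
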